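(* Let $T$ be a local, translation-invariant stochastic matrix on $\mathbb{Z}\times\{1,\dots,D\}$ with $\det X(k)\ne0$ for all $k\in[-\pi,\pi]$. Suppose the transition-probability distribution is symmetric around displacement $l_0\in\mathbb{Z}$, in the sense that there is a real orthogonal $D\times D$ matrix $M$ with $$\sum_{b,c}M_{a,b}\,T_{j+l_0-l,b;j,c}\,M_{d,c}=T_{j+l_0+l,a;j,d}\quad\text{for all } l\in\mathbb{Z},\ j,\ a,\ d .$$ Then $w(T,0)=-l_0D$.
   Context: States are pairs $(j,a)$, $j\in\mathbb{Z}$, $a\in\{1,\dots,D\}$. A stochastic matrix is a real matrix $T=(T_{i,a;j,b})$ with $T_{i,a;j,b}\ge0$ and $\sum_{i,a}T_{i,a;j,b}=1$ for all $(j,b)$. It is local if there are $C,\ell>0$ with $T_{i,a;j,b}\le Ce^{-|i-j|/\ell}$ for all sufficiently large $|i-j|$, and translation invariant if $T_{i+1,a;j+1,b}=T_{i,a;j,b}$. The Bloch matrix is $X(k)$ with $X_{a,b}(k)=\sum_{l\in\mathbb{Z}}T_{j+l,a;j,b}e^{-ikl}$, $k\in[-\pi,\pi]$, and $w(T,0)=\int_{-\pi}^{\pi}\frac{dk}{2\pi i}\partial_k\log\det X(k)\in\mathbb{Z}$. *)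

theory Defs
  imports "HOL-Analysis.Analysis"
begin

text \<open>States (j,a) with j an integer and a ranging over a finite index type 'n
  standing for {1..D}, D = CARD('n). A matrix on the states is a function
  T :: int => 'n => int => 'n => real, with T i a j b the entry T_{i,a;j,b}.\<close>

definition stochastic :: "(int \<Rightarrow> 'n::finite \<Rightarrow> int \<Rightarrow> 'n \<Rightarrow> real) \<Rightarrow> bool" where
  "stochastic T \<longleftrightarrow> (\<forall>i a j b. T i a j b \<ge> 0) \<and>
     (\<forall>j b. ((\<lambda>(i, a). T i a j b) has_sum 1) (UNIV :: (int \<times> 'n) set))"

definition local_matrix :: "(int \<Rightarrow> 'n::finite \<Rightarrow> int \<Rightarrow> 'n \<Rightarrow> real) \<Rightarrow> bool" where
  "local_matrix T \<longleftrightarrow> (\<exists>C ell. C > 0 \<and> ell > 0 \<and> (\<exists>N. \<forall>i a j b. \<bar>i - j\<bar> \<ge> N \<longrightarrow>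
      T i a j b \<le> C * exp (- real_of_int \<bar>i - j\<bar> / ell)))"

definition translation_invariant :: "(int \<Rightarrow> 'n::finite \<Rightarrow> int \<Rightarrow> 'n \<Rightarrow> real) \<Rightarrow> bool" where
  "translation_invariant T \<longleftrightarrow> (\<forall>i a j b. T (i + 1) a (j + 1) b = T i a j b)"

text \<open>Bloch matrix X(k)_{a,b} = sum_l T_{j+l,a;j,b} e^{-ikl}; by translation invariance
  it is independent of j, and we take j = 0.\<close>
definition bloch :: "(int \<Rightarrow> 'n::finite \<Rightarrow> int \<Rightarrow> 'n \<Rightarrow> real) \<Rightarrow> real \<Rightarrow> complex ^ 'n ^ 'n" where
  "bloch T k = (\<chi> a b. infsum (\<lambda>l::int. complex_of_real (T l a 0 b) *
                                 exp (- \<i> * complex_of_real k * of_int l)) UNIV)"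

text \<open>w(T,0) = int_{-pi}^{pi} dk/(2 pi i) d/dk log det X(k)
   = (1/(2 pi i)) int_{-pi}^{pi} (d/dk det X(k)) / det X(k) dk.\<close>
definition winding_w0 :: "(int \<Rightarrow> 'n::finite \<Rightarrow> int \<Rightarrow> 'n \<Rightarrow> real) \<Rightarrow> complex" where
  "winding_w0 T = integral {-pi..pi}
      (\<lambda>k. vector_derivative (\<lambda>q. det (bloch T q)) (at k) / det (bloch T k)) / (2 * pi * \<i>)"

end

theory Submission
  imports Defs "HOL-Complex_Analysis.Complex_Analysis"
begin

(* The entries of the Bloch matrix are Fourier series with exponentially decaying coefficients
   (locality), so X extends holomorphically to a strip |Im z| < delta. The symmetry hypothesis says
   that the coefficient matrices satisfy T_l = M T_(2 l0 - l) M^T; reindexing the series gives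
   X(z) = exp(-2 i l0 z) M X(-z) M^T, hence det X(-z) = exp(K z) det X(z) with K = 2 i l0 D.
   Differentiating, the logarithmic derivative h of det X satisfies h(-k) = -K - h(k), so its
   integral over the symmetric interval [-pi, pi] is -pi K, and w(T,0) = -pi K / (2 pi i) = -l0 D. *)

lemma has_sum_sum:
  fixes f :: "'i \<Rightarrow> 'a \<Rightarrow> 'b::topological_comm_monoid_add"
  assumes "finite I" "\<And>i. i \<in> I \<Longrightarrow> (f i has_sum s i) B"
  shows "((\<lambda>x. \<Sum>i\<in>I. f i x) has_sum (\<Sum>i\<in>I. s i)) B"
  using assms by (induction I rule: finite_induct) (auto intro: has_sum_add)

lemma infsum_sum:
  fixes f :: "'i \<Rightarrow> 'a \<Rightarrow> 'b::{topological_comm_monoid_add, t2_space}"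
  assumes "finite I" "\<And>i. i \<in> I \<Longrightarrow> f i summable_on B"
  shows "(\<Sum>\<^sub>\<infinity>x\<in>B. \<Sum>i\<in>I. f i x) = (\<Sum>i\<in>I. \<Sum>\<^sub>\<infinity>x\<in>B. f i x)"
  using assms by (intro infsumI has_sum_sum) auto

lemma summable_on_exp_neg_abs_int:
  fixes c :: real
  assumes "c > 0"
  shows "(\<lambda>l::int. exp (- c * of_int \<bar>l\<bar>)) summable_on UNIV"
proof -
  let ?g = "\<lambda>l::int. exp (- c * of_int \<bar>l\<bar>)"
  have geometric: "summable (\<lambda>n. exp (- c) ^ n)"
    using summable_geometric[of "exp (- c)"] assms by simp
  have "?g summable_on range f" if "inj f" "\<And>n. \<bar>f n\<bar> = int n" for f :: "nat \<Rightarrow> int"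
  proof -
    have "\<bar>real_of_int (f n)\<bar> = real n" for n
      by (metis that(2) of_int_abs of_int_of_nat_eq)
    then show ?thesis
      using geometric that(1)
      by (simp add: summable_on_reindex o_def summable_on_UNIV_nonneg_real_iff
                    exp_of_nat_mult[symmetric] mult.commute)
  qed
  then have "?g summable_on (range int \<union> range (\<lambda>n. - int n))"
    by (intro summable_on_union) (auto simp: inj_def)
  also have "range int \<union> range (\<lambda>n. - int n) = UNIV"
  proof -
    have "x \<in> range int \<union> range (\<lambda>n. - int n)" for x :: int
      by (cases x rule: int_cases2) auto
    then show ?thesis by blast
  qed
  finally show ?thesis .
qed

lemma exp_decay_imp_exp_moment:
  fixes g :: "int \<Rightarrow> real"
  assumes nonneg: "\<And>l. 0 \<le> g l" and "ell > 0"
    and decay: "\<And>l. N \<le> \<bar>l\<bar> \<Longrightarrow> g l \<le> C * exp (- of_int \<bar>l\<bar> / ell)"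
  shows "(\<lambda>l. g l * exp (of_int \<bar>l\<bar> / (2 * ell))) summable_on UNIV"
proof -
  let ?h = "\<lambda>l. g l * exp (of_int \<bar>l\<bar> / (2 * ell))"
  let ?F = "{l::int. \<bar>l\<bar> < N}"
  have "finite ?F"
    by (rule finite_subset[of _ "{-N..N}"]) auto
  have "(\<lambda>l. C * exp (- (1 / (2 * ell)) * of_int \<bar>l\<bar>)) summable_on UNIV"
    using \<open>ell > 0\<close> by (intro summable_on_cmult_right summable_on_exp_neg_abs_int) simp
  then have "(\<lambda>l. C * exp (- (1 / (2 * ell)) * of_int \<bar>l\<bar>)) summable_on (UNIV - ?F)"
    by (rule summable_on_subset) simp
  then have "?h summable_on (UNIV - ?F)"
  proof (rule summable_on_comparison_test)
    fix l assume "l \<in> UNIV - ?F"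
    then have "?h l \<le> C * exp (- of_int \<bar>l\<bar> / ell) * exp (of_int \<bar>l\<bar> / (2 * ell))"
      using decay by (intro mult_right_mono) auto
    also have "\<dots> = C * exp (- (1 / (2 * ell)) * of_int \<bar>l\<bar>)"
      by (simp add: mult.assoc flip: exp_add)
    finally show "?h l \<le> C * exp (- (1 / (2 * ell)) * of_int \<bar>l\<bar>)" .
  qed (use nonneg in simp)
  then have "?h summable_on ((UNIV - ?F) \<union> ?F)"
    using \<open>finite ?F\<close> by (intro summable_on_union) auto
  then show ?thesis by simp
qed

definition fourier_series :: "(int \<Rightarrow> complex) \<Rightarrow> complex \<Rightarrow> complex" where
  "fourier_series c z = (\<Sum>\<^sub>\<infinity>l. c l * exp (- \<i> * z * of_int l))"

lemma norm_fourier_term_le: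
  assumes "\<bar>Im z\<bar> \<le> \<delta>"
  shows "norm (c l * exp (- \<i> * z * of_int l)) \<le> norm (c l) * exp (\<delta> * of_int \<bar>l\<bar>)"
proof -
  have "Im z * of_int l \<le> \<bar>Im z\<bar> * of_int \<bar>l\<bar>"
    by (metis abs_ge_self abs_mult of_int_abs)
  also have "\<dots> \<le> \<delta> * of_int \<bar>l\<bar>"
    using assms by (intro mult_right_mono) auto
  finally have "Im z * of_int l \<le> \<delta> * of_int \<bar>l\<bar>" .
  then show ?thesis
    by (simp add: norm_mult norm_exp_eq_Re mult_left_mono)
qed

lemma fourier_series_summable:
  assumes "(\<lambda>l. norm (c l) * exp (\<delta> * of_int \<bar>l\<bar>)) summable_on UNIV" "\<bar>Im z\<bar> \<le> \<delta>"
  shows "(\<lambda>l. c l * exp (- \<i> * z * of_int l)) summable_on UNIV"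
proof (rule abs_summable_summable)
  show "(\<lambda>l. norm (c l * exp (- \<i> * z * of_int l))) summable_on UNIV"
    by (rule summable_on_comparison_test[OF assms(1)]) (use norm_fourier_term_le assms(2) in auto)
qed

lemma fourier_series_holomorphic:
  assumes summable: "(\<lambda>l. norm (c l) * exp (\<delta> * of_int \<bar>l\<bar>)) summable_on UNIV"
  shows "fourier_series c holomorphic_on {z. \<bar>Im z\<bar> < \<delta>}"
proof -
  let ?S = "{z. \<bar>Im z\<bar> < \<delta>}"
  let ?partial = "\<lambda>L z. \<Sum>l\<in>L. c l * exp (- \<i> * z * of_int l)"
  have open_strip: "open ?S"
    by (intro open_Collect_less continuous_intros)
  have ulim: "uniform_limit ?S ?partial (fourier_series c) (finite_subsets_at_top UNIV)"
    unfolding fourier_series_def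
  proof (rule Weierstrass_m_test_general[OF _ summable])
    fix l z assume "z \<in> ?S"
    then show "norm (c l * exp (- \<i> * z * of_int l)) \<le> norm (c l) * exp (\<delta> * of_int \<bar>l\<bar>)"
      by (intro norm_fourier_term_le) simp
  qed
  have "fourier_series c holomorphic_on ball z r" if "cball z r \<subseteq> ?S" for z r
  proof (rule holomorphic_uniform_limit)
    show "uniform_limit (cball z r) ?partial (fourier_series c) (finite_subsets_at_top UNIV)"
      by (rule uniform_limit_on_subset[OF ulim that])
    show "\<forall>\<^sub>F L in finite_subsets_at_top UNIV.
            continuous_on (cball z r) (?partial L) \<and> ?partial L holomorphic_on ball z r"
      by (intro always_eventually allI conjI continuous_intros holomorphic_intros)
  qed simp
  then have "fourier_series c field_differentiable at z" if "z \<in> ?S" for z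
    using open_strip that
    by (metis open_contains_cball centre_in_ball holomorphic_on_imp_differentiable_at open_ball)
  then show ?thesis
    unfolding holomorphic_on_def using field_differentiable_at_within by blast
qed

lemma fourier_series_reflect:
  "fourier_series (\<lambda>l. c (p - l)) z = exp (- \<i> * z * of_int p) * fourier_series c (- z)"
proof -
  have "fourier_series (\<lambda>l. c (p - l)) z
      = (\<Sum>\<^sub>\<infinity>m. exp (- \<i> * z * of_int p) * (c m * exp (- \<i> * (- z) * of_int m)))"
    unfolding fourier_series_def
  proof (rule infsum_reindex_bij_witness[of UNIV "\<lambda>m. p - m" "\<lambda>l. p - l"])
    fix l :: int
    have "exp (- \<i> * z * of_int p) * exp (- \<i> * (- z) * of_int (p - l)) = exp (- \<i> * z * of_int l)"
      by (simp add: mult_exp_exp algebra_simps)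
    then show "exp (- \<i> * z * of_int p) * (c (p - l) * exp (- \<i> * (- z) * of_int (p - l)))
             = c (p - l) * exp (- \<i> * z * of_int l)"
      by (metis mult.left_commute)
  qed auto
  also have "\<dots> = exp (- \<i> * z * of_int p) * fourier_series c (- z)"
    unfolding fourier_series_def by (rule infsum_cmult_right')
  finally show ?thesis .
qed

lemma fourier_series_sum:
  assumes "finite A" "\<And>x. x \<in> A \<Longrightarrow> (\<lambda>l. c x l * exp (- \<i> * z * of_int l)) summable_on UNIV"
  shows "fourier_series (\<lambda>l. \<Sum>x\<in>A. c x l) z = (\<Sum>x\<in>A. fourier_series (c x) z)"
  unfolding fourier_series_def sum_distrib_right using assms by (rule infsum_sum)

lemma fourier_series_cmult: "fourier_series (\<lambda>l. \<alpha> * c l) z = \<alpha> * fourier_series c z"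
  unfolding fourier_series_def by (simp add: mult.assoc infsum_cmult_right')

definition bloch_ext :: "(int \<Rightarrow> 'n::finite \<Rightarrow> int \<Rightarrow> 'n \<Rightarrow> real) \<Rightarrow> complex \<Rightarrow> complex ^ 'n ^ 'n" where
  "bloch_ext T z = (\<chi> a b. fourier_series (\<lambda>l. complex_of_real (T l a 0 b)) z)"

lemma bloch_eq_bloch_ext: "bloch T k = bloch_ext T (complex_of_real k)"
  unfolding bloch_def bloch_ext_def fourier_series_def ..

lemma stochastic_nonneg: "stochastic T \<Longrightarrow> 0 \<le> T i a j b"
  unfolding stochastic_def by blast

lemma local_matrix_exp_moment:
  fixes T :: "int \<Rightarrow> 'n::finite \<Rightarrow> int \<Rightarrow> 'n \<Rightarrow> real"
  assumes "local_matrix T" and nonneg: "\<And>i a j b. 0 \<le> T i a j b"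
  obtains \<delta> :: real where "\<delta> > 0"
    "\<And>a b. (\<lambda>l. norm (complex_of_real (T l a 0 b)) * exp (\<delta> * of_int \<bar>l\<bar>)) summable_on UNIV"
proof -
  obtain C ell N where "ell > 0"
    and decay: "\<And>i a j b. N \<le> \<bar>i - j\<bar> \<Longrightarrow> T i a j b \<le> C * exp (- of_int \<bar>i - j\<bar> / ell)"
    using assms(1) unfolding local_matrix_def by blast
  have "(\<lambda>l. T l a 0 b * exp (of_int \<bar>l\<bar> / (2 * ell))) summable_on UNIV" for a b
    using exp_decay_imp_exp_moment[of "\<lambda>l. T l a 0 b" ell N C] decay[of _ 0] nonneg \<open>ell > 0\<close>
    by simp
  moreover have "norm (complex_of_real (T l a 0 b)) = T l a 0 b" for l a b
    using nonneg by simp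
  ultimately show thesis
    using \<open>ell > 0\<close> by (intro that[of "1 / (2 * ell)"]) simp_all
qed

lemma det_holomorphic:
  fixes A :: "complex \<Rightarrow> complex ^ 'n::finite ^ 'n"
  assumes "\<And>a b. (\<lambda>z. A z $ a $ b) holomorphic_on S"
  shows "(\<lambda>z. det (A z)) holomorphic_on S"
  unfolding det_def by (intro holomorphic_intros assms)

lemma det_scalar_mult:
  fixes A :: "'a::comm_ring_1 ^ 'n::finite ^ 'n"
  shows "det (\<chi> i j. c * A $ i $ j) = c ^ CARD('n) * det A"
  unfolding det_def by (simp add: sum_distrib_left prod.distrib mult_ac)

lemma det_of_real_matrix: "det (map_matrix of_real M) = of_real (det (M :: real ^ 'n::finite ^ 'n))"
  unfolding det_def by simp

lemma det_orthogonal_conjugate: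
  fixes M :: "real ^ 'n::finite ^ 'n" and A :: "complex ^ 'n ^ 'n"
  assumes "orthogonal_matrix M"
  shows "det (map_matrix of_real M ** A ** transpose (map_matrix of_real M)) = det A"
proof -
  have "det M * det M = 1"
    using det_orthogonal_matrix[OF assms] by auto
  then have "det (map_matrix of_real M :: complex ^ 'n ^ 'n) * det (map_matrix of_real M) = 1"
    by (simp flip: of_real_mult add: det_of_real_matrix)
  then show ?thesis
    by (simp add: det_mul mult_ac)
qed

lemma bloch_ext_reflection:
  fixes T :: "int \<Rightarrow> 'n::finite \<Rightarrow> int \<Rightarrow> 'n \<Rightarrow> real" and M :: "real ^ 'n ^ 'n"
  assumes moment: "\<And>a b. (\<lambda>l. norm (complex_of_real (T l a 0 b)) * exp (\<delta> * of_int \<bar>l\<bar>)) summable_on UNIV"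
    and "\<bar>Im z\<bar> \<le> \<delta>"
    and sym: "\<And>l a d. (\<Sum>b\<in>UNIV. \<Sum>c\<in>UNIV. M $ a $ b * T (l0 - l) b 0 c * M $ d $ c) = T (l0 + l) a 0 d"
  shows "bloch_ext T z = (\<chi> a d. exp (- \<i> * z * of_int (2 * l0)) *
           (map_matrix of_real M ** bloch_ext T (- z) ** transpose (map_matrix of_real M)) $ a $ d)"
proof -
  define w where "w = (\<lambda>a d (b, c). complex_of_real (M $ a $ b * M $ d $ c))"
  define g where "g = (\<lambda>a d m. \<Sum>bc\<in>UNIV. w a d bc * complex_of_real (T m (fst bc) 0 (snd bc)))"
  have coeff: "(\<lambda>l. complex_of_real (T l a 0 d)) = (\<lambda>l. g a d (2 * l0 - l))" for a d
  proof
    fix l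
    have "T l a 0 d = (\<Sum>b\<in>UNIV. \<Sum>c\<in>UNIV. M $ a $ b * T (2 * l0 - l) b 0 c * M $ d $ c)"
      using sym[where l = "l - l0"] by simp
    then show "complex_of_real (T l a 0 d) = g a d (2 * l0 - l)"
      by (simp add: g_def w_def sum.cartesian_product' case_prod_beta mult_ac flip: UNIV_Times_UNIV)
  qed
  have summable: "(\<lambda>l. w a d bc * complex_of_real (T l (fst bc) 0 (snd bc)) * exp (- \<i> * (- z) * of_int l))
                   summable_on UNIV" for a d bc
  proof -
    have "(\<lambda>l. complex_of_real (T l (fst bc) 0 (snd bc)) * exp (- \<i> * (- z) * of_int l)) summable_on UNIV"
      by (rule fourier_series_summable[OF moment]) (use assms(2) in simp)
    then show ?thesis
      unfolding mult.assoc by (rule summable_on_cmult_right)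
  qed
  have entry: "fourier_series (\<lambda>l. complex_of_real (T l a 0 d)) z
      = exp (- \<i> * z * of_int (2 * l0)) *
        (\<Sum>bc\<in>UNIV. w a d bc * fourier_series (\<lambda>l. complex_of_real (T l (fst bc) 0 (snd bc))) (- z))"
    for a d
  proof -
    have "fourier_series (\<lambda>l. complex_of_real (T l a 0 d)) z
        = exp (- \<i> * z * of_int (2 * l0)) * fourier_series (g a d) (- z)"
      by (simp only: coeff fourier_series_reflect)
    also have "fourier_series (g a d) (- z)
        = (\<Sum>bc\<in>UNIV. w a d bc * fourier_series (\<lambda>l. complex_of_real (T l (fst bc) 0 (snd bc))) (- z))"
      unfolding g_def using summable by (subst fourier_series_sum) (simp_all add: fourier_series_cmult)
    finally show ?thesis .
  qed
  have "(map_matrix of_real M ** bloch_ext T (- z) ** transpose (map_matrix of_real M)) $ a $ d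
      = (\<Sum>bc\<in>UNIV. w a d bc * bloch_ext T (- z) $ fst bc $ snd bc)" for a d
    by (simp add: matrix_matrix_mult_def transpose_def w_def sum_distrib_left sum_distrib_right
        sum.cartesian_product' case_prod_beta mult_ac flip: UNIV_Times_UNIV)
       (subst sum.swap, simp add: mult_ac)
  then show ?thesis
    by (simp add: vec_eq_iff entry bloch_ext_def)
qed

lemma det_bloch_ext_holomorphic:
  fixes T :: "int \<Rightarrow> 'n::finite \<Rightarrow> int \<Rightarrow> 'n \<Rightarrow> real"
  assumes "\<And>a b. (\<lambda>l. norm (complex_of_real (T l a 0 b)) * exp (\<delta> * of_int \<bar>l\<bar>)) summable_on UNIV"
  shows "(\<lambda>z. det (bloch_ext T z)) holomorphic_on {z. \<bar>Im z\<bar> < \<delta>}"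
  unfolding bloch_ext_def by (intro det_holomorphic) (simp add: fourier_series_holomorphic[OF assms])

lemma winding_w0_eq_integral_log_deriv:
  fixes T :: "int \<Rightarrow> 'n::finite \<Rightarrow> int \<Rightarrow> 'n \<Rightarrow> real"
  defines "D \<equiv> \<lambda>z. det (bloch_ext T z)"
  assumes "D holomorphic_on S" and "open S" and "\<And>k. complex_of_real k \<in> S"
  shows "winding_w0 T = integral {-pi..pi} (\<lambda>k. deriv D (of_real k) / D (of_real k)) / (2 * pi * \<i>)"
proof -
  have "vector_derivative (\<lambda>q. D (of_real q)) (at k) = deriv D (of_real k)" for k
    using assms(2-4) by (intro vector_derivative_of_real_right holomorphic_on_imp_differentiable_at)
  then show ?thesis
    unfolding winding_w0_def bloch_eq_bloch_ext D_def by simp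
qed

lemma det_bloch_ext_reflection:
  fixes T :: "int \<Rightarrow> 'n::finite \<Rightarrow> int \<Rightarrow> 'n \<Rightarrow> real" and M :: "real ^ 'n ^ 'n"
  assumes "\<And>a b. (\<lambda>l. norm (complex_of_real (T l a 0 b)) * exp (\<delta> * of_int \<bar>l\<bar>)) summable_on UNIV"
    and "\<bar>Im z\<bar> \<le> \<delta>" and "orthogonal_matrix M"
    and "\<And>l a d. (\<Sum>b\<in>UNIV. \<Sum>c\<in>UNIV. M $ a $ b * T (l0 - l) b 0 c * M $ d $ c) = T (l0 + l) a 0 d"
  shows "det (bloch_ext T (- z)) = exp (2 * \<i> * of_int l0 * of_nat CARD('n) * z) * det (bloch_ext T z)"
proof -
  let ?e = "exp (- \<i> * z * of_int (2 * l0))" and ?k = "exp (2 * \<i> * of_int l0 * of_nat CARD('n) * z)"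
  have "det (bloch_ext T z) = ?e ^ CARD('n) * det (bloch_ext T (- z))"
    by (subst bloch_ext_reflection[where T = T and M = M, OF assms(1,2,4)])
       (simp add: det_scalar_mult det_orthogonal_conjugate[OF assms(3)])
  then have "?k * det (bloch_ext T z) = (?k * ?e ^ CARD('n)) * det (bloch_ext T (- z))"
    by (simp only: mult.assoc)
  also have "?k * ?e ^ CARD('n) = 1"
    by (simp add: mult_exp_exp flip: exp_of_nat_mult)
  finally show ?thesis
    by simp
qed

lemma log_deriv_reflection:
  fixes f :: "complex \<Rightarrow> complex"
  assumes hol: "f holomorphic_on S" and "open S" and "z \<in> S" and "- z \<in> S" and "f z \<noteq> 0"
    and reflect: "\<And>w. w \<in> S \<Longrightarrow> f (- w) = exp (K * w) * f w"
  shows "deriv f (- z) / f (- z) = - K - deriv f z / f z"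
proof -
  have f_deriv: "(f has_field_derivative deriv f w) (at w)" if "w \<in> S" for w
    using holomorphic_derivI[OF hol \<open>open S\<close> that] .
  have "((\<lambda>w. f (- w)) has_field_derivative - deriv f (- z)) (at z)"
    using DERIV_chain2[OF f_deriv[OF \<open>- z \<in> S\<close>] DERIV_minus[OF DERIV_ident]] by simp
  then have "((\<lambda>w. exp (K * w) * f w) has_field_derivative - deriv f (- z)) (at z)"
    by (rule has_field_derivative_transform_within_open[OF _ \<open>open S\<close> \<open>z \<in> S\<close>]) (simp_all add: reflect)
  moreover have "((\<lambda>w. exp (K * w) * f w) has_field_derivative
                   exp (K * z) * K * f z + exp (K * z) * deriv f z) (at z)"
    by (auto intro!: derivative_eq_intros f_deriv \<open>z \<in> S\<close>)
  ultimately have "- deriv f (- z) = exp (K * z) * K * f z + exp (K * z) * deriv f z"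
    by (rule DERIV_unique)
  then have "deriv f (- z) = - (exp (K * z) * (K * f z + deriv f z))"
    by (metis minus_minus distrib_left mult.assoc)
  then have "deriv f (- z) / f (- z) = - (exp (K * z) * (K * f z + deriv f z)) / (exp (K * z) * f z)"
    by (simp only: reflect[OF \<open>z \<in> S\<close>])
  also have "\<dots> = - K - deriv f z / f z"
    using \<open>f z \<noteq> 0\<close> by (simp add: field_simps)
  finally show ?thesis .
qed

lemma integral_symmetric_interval_reflection:
  fixes h :: "real \<Rightarrow> 'a::real_normed_vector"
  assumes "h integrable_on {-a..a}" and "0 \<le> a"
    and reflect: "\<And>x. x \<in> {-a..a} \<Longrightarrow> h (- x) = c - h x"
  shows "integral {-a..a} h = a *\<^sub>R c"
proof -
  define I where "I = integral {-a..a} h"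
  have I: "(h has_integral I) {-a..a}"
    unfolding I_def using assms(1) by (rule integrable_integral)
  have "((\<lambda>x. c) has_integral (2 * a) *\<^sub>R c) {-a..a}"
    using has_integral_const_real[of c "-a" a] \<open>0 \<le> a\<close>
    by (subst (asm) content_real) (simp_all only: mult_2 diff_minus_eq_add neg_le_0_iff_le)
  then have "((\<lambda>x. c - h x) has_integral (2 * a) *\<^sub>R c - I) {-a..a}"
    using I by (rule has_integral_diff)
  moreover have "((\<lambda>x. h (- x)) has_integral I) {-a..a}"
    using has_integral_reflect_real[of h I a "-a"] I by simp
  then have "((\<lambda>x. c - h x) has_integral I) {-a..a}"
    by (rule has_integral_eq[rotated]) (simp add: reflect)
  ultimately have "(2 * a) *\<^sub>R c - I = I"
    by (rule has_integral_unique)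
  then have "2 *\<^sub>R I = 2 *\<^sub>R (a *\<^sub>R c)"
    by (metis diff_eq_eq scaleR_2 scaleR_scaleR)
  then show ?thesis
    unfolding I_def by (metis scaleR_cancel_left zero_neq_numeral)
qed

lemma integral_log_deriv_reflection:
  fixes f :: "complex \<Rightarrow> complex"
  assumes hol: "f holomorphic_on S" and "open S" and symm: "\<And>z. z \<in> S \<Longrightarrow> - z \<in> S"
    and reflect: "\<And>z. z \<in> S \<Longrightarrow> f (- z) = exp (K * z) * f z"
    and "0 \<le> a" and segment: "complex_of_real ` {-a..a} \<subseteq> S"
    and nonzero: "\<And>x. x \<in> {-a..a} \<Longrightarrow> f (complex_of_real x) \<noteq> 0"
  shows "integral {-a..a} (\<lambda>x. deriv f (of_real x) / f (of_real x)) = - complex_of_real a * K"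
proof -
  have of_real: "continuous_on {-a..a} (complex_of_real :: real \<Rightarrow> complex)"
    by (intro continuous_intros)
  have "continuous_on S (deriv f)"
    using holomorphic_deriv[OF hol \<open>open S\<close>] by (rule holomorphic_on_imp_continuous_on)
  then have "continuous_on {-a..a} (\<lambda>x. deriv f (of_real x))"
    by (rule continuous_on_compose2[OF _ of_real segment])
  moreover have "continuous_on {-a..a} (\<lambda>x. f (of_real x))"
    using holomorphic_on_imp_continuous_on[OF hol] by (rule continuous_on_compose2[OF _ of_real segment])
  ultimately have "continuous_on {-a..a} (\<lambda>x. deriv f (of_real x) / f (of_real x))"
    by (rule continuous_on_divide) (use nonzero in blast)
  then have "integral {-a..a} (\<lambda>x. deriv f (of_real x) / f (of_real x)) = a *\<^sub>R (- K)"
  proof (rule integral_symmetric_interval_reflection[OF integrable_continuous_real \<open>0 \<le> a\<close>])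
    fix x assume "x \<in> {-a..a}"
    then have "complex_of_real x \<in> S"
      using segment by blast
    then show "deriv f (of_real (- x)) / f (of_real (- x)) = - K - deriv f (of_real x) / f (of_real x)"
      using log_deriv_reflection[OF hol \<open>open S\<close> _ symm nonzero[OF \<open>x \<in> {-a..a}\<close>] reflect] by simp
  qed
  then show ?thesis
    by (simp add: scaleR_conv_of_real)
qed

theorem mainTheorem8:
  fixes T :: "int \<Rightarrow> 'n::finite \<Rightarrow> int \<Rightarrow> 'n \<Rightarrow> real"
    and l0 :: int
  assumes "stochastic T" and "local_matrix T" and "translation_invariant T"
    and "\<forall>k\<in>{-pi..pi}. det (bloch T k) \<noteq> 0"
    and "\<exists>M :: real ^ 'n ^ 'n. orthogonal_matrix M \<and>
           (\<forall>l j a d. (\<Sum>b\<in>UNIV. \<Sum>c\<in>UNIV. M $ a $ b * T (j + l0 - l) b j c * M $ d $ c)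
                        = T (j + l0 + l) a j d)"
  shows "winding_w0 T = - (of_int l0 * of_nat CARD('n))"
proof -
  \<comment> \<open>Of stochasticity only the nonnegativity of the entries is used.\<close>
  obtain \<delta> where "\<delta> > 0" and moment:
    "\<And>a b. (\<lambda>l. norm (complex_of_real (T l a 0 b)) * exp (\<delta> * of_int \<bar>l\<bar>)) summable_on UNIV"
    using local_matrix_exp_moment[OF assms(2) stochastic_nonneg[OF assms(1)]] by blast
  obtain M :: "real ^ 'n ^ 'n" where "orthogonal_matrix M"
    and sym: "\<forall>l j a d. (\<Sum>b\<in>UNIV. \<Sum>c\<in>UNIV. M $ a $ b * T (j + l0 - l) b j c * M $ d $ c)
                          = T (j + l0 + l) a j d"
    using assms(5) by blast
  define S where "S = {z. \<bar>Im z\<bar> < \<delta>}"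
  define D where "D = (\<lambda>z. det (bloch_ext T z))"
  define K where "K = 2 * \<i> * of_int l0 * of_nat CARD('n)"
  have "open S"
    unfolding S_def by (intro open_Collect_less continuous_intros)
  have real_in_S: "complex_of_real k \<in> S" for k
    using \<open>\<delta> > 0\<close> by (simp add: S_def)
  have hol: "D holomorphic_on S"
    unfolding D_def S_def by (rule det_bloch_ext_holomorphic[where T = T, OF moment])
  have reflect: "D (- z) = exp (K * z) * D z" if "z \<in> S" for z
    unfolding D_def K_def using that \<open>orthogonal_matrix M\<close> sym[rule_format, where j = 0]
    by (intro det_bloch_ext_reflection[where T = T, OF moment]) (simp_all add: S_def)
  have "winding_w0 T = integral {-pi..pi} (\<lambda>k. deriv D (of_real k) / D (of_real k)) / (2 * pi * \<i>)"
    using winding_w0_eq_integral_log_deriv[OF hol[unfolded D_def] \<open>open S\<close> real_in_S]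
    unfolding D_def .
  also have "integral {-pi..pi} (\<lambda>k. deriv D (of_real k) / D (of_real k)) = - of_real pi * K"
    using assms(4) real_in_S
    by (intro integral_log_deriv_reflection[OF hol \<open>open S\<close> _ reflect]) (auto simp: S_def D_def bloch_eq_bloch_ext)
  also have "- of_real pi * K / (2 * pi * \<i>) = - (of_int l0 * of_nat CARD('n))"
    by (simp add: K_def)
  finally show ?thesis .
qed

end
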